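(* Let $k,m$ be integers with $0<k$ and $2k<m$, and let $n=2k-1$. Then $\alpha(m,n,k)=\binom{n}{k}=h(m,n,k)$, and $\binom{[n]}{k}$ is the unique $(m,n,k)$-intersecting family of maximum cardinality.
   Context: For positive integers $a\leqslant b$, $[a,b]=\{a,a+1,\dots,b\}$ and $[a]=[1,a]$; $\binom{X}{k}$ denotes the family of all $k$-subsets of a set $X$. A family of sets is intersecting if no two of its members are disjoint. For integers $0<k\leqslant n<2k\leqslant m$, an $(m,n,k)$-intersecting family is an intersecting family $\mathcal{F}$ with $\binom{[n]}{k}\subseteq\mathcal{F}\subseteq\binom{[m]}{k}$, and $\alpha(m,n,k)$ is the maximum cardinality of an $(m,n,k)$-intersecting family. Define $h(m,n,k)=\binom{n}{k}+\sum_{i=1}^{2k-n-1}\binom{n-1}{k-i-1}\binom{m-n}{i}$ (an empty sum is $0$). *)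

theory Defs
  imports Main
begin

definition ksubsets :: "'a set \<Rightarrow> nat \<Rightarrow> 'a set set" where
  "ksubsets X k = {A. A \<subseteq> X \<and> card A = k}"

definition intersecting :: "'a set set \<Rightarrow> bool" where
  "intersecting F \<longleftrightarrow> (\<forall>A\<in>F. \<forall>B\<in>F. A \<inter> B \<noteq> {})"

definition mnk_intersecting :: "nat \<Rightarrow> nat \<Rightarrow> nat \<Rightarrow> nat set set \<Rightarrow> bool" where
  "mnk_intersecting m n k F \<longleftrightarrow>
     intersecting F \<and> ksubsets {1..n} k \<subseteq> F \<and> F \<subseteq> ksubsets {1..m} k"

definition alpha :: "nat \<Rightarrow> nat \<Rightarrow> nat \<Rightarrow> nat" where
  "alpha m n k = Max (card ` {F. mnk_intersecting m n k F})"

definition h :: "nat \<Rightarrow> nat \<Rightarrow> nat \<Rightarrow> nat" where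
  "h m n k = (n choose k) +
     (\<Sum>i\<in>{1..int (2*k) - int n - 1}. ((n - 1) choose (k - nat i - 1)) * ((m - n) choose (nat i)))"

end

theory Submission
  imports Defs
begin

text \<open>On a ground set of size \<open>2k - 1\<close> any two \<open>k\<close>-sets meet, so \<open>\<binom>[n]k\<close> is itself
  intersecting. Conversely, a \<open>k\<close>-set \<open>A\<close> not contained in \<open>[n]\<close> misses at least \<open>k\<close> points
  of \<open>[n]\<close>, and a \<open>k\<close>-subset of those is a member of \<open>\<binom>[n]k\<close> disjoint from \<open>A\<close>. Hence
  \<open>\<binom>[n]k\<close> is the only \<open>(m,n,k)\<close>-intersecting family, and the sum in \<open>h\<close> is empty.\<close>

lemma card_ksubsets:
  assumes "finite X"
  shows "card (ksubsets X k) = card X choose k"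
  unfolding ksubsets_def using n_subsets[OF assms] by simp

lemma ksubsets_mono:
  assumes "X \<subseteq> Y"
  shows "ksubsets X k \<subseteq> ksubsets Y k"
  using assms unfolding ksubsets_def by auto

lemma intersecting_ksubsets:
  assumes "finite X" and "card X < 2 * k"
  shows "intersecting (ksubsets X k)"
  unfolding intersecting_def
proof (intro ballI notI)
  fix A B assume A: "A \<in> ksubsets X k" and B: "B \<in> ksubsets X k" and disj: "A \<inter> B = {}"
  have "A \<subseteq> X" "B \<subseteq> X" "card A = k" "card B = k"
    using A B unfolding ksubsets_def by auto
  then have "card (A \<union> B) = 2 * k"
    using card_Un_disjoint[OF _ _ disj] finite_subset[OF _ assms(1)] by simp
  moreover have "card (A \<union> B) \<le> card X"
    using \<open>A \<subseteq> X\<close> \<open>B \<subseteq> X\<close> by (intro card_mono assms(1)) auto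
  ultimately show False using assms(2) by simp
qed

lemma intersecting_superfamily_member_subset:
  assumes "finite X" and "2 * k \<le> card X + 1" and "0 < k"
    and "intersecting F" and "ksubsets X k \<subseteq> F"
    and "A \<in> F" and "card A = k"
  shows "A \<subseteq> X"
proof (rule ccontr)
  assume "\<not> A \<subseteq> X"
  have "finite A" using assms(3,7) card_ge_0_finite by blast
  have "A \<inter> X \<subset> A" using \<open>\<not> A \<subseteq> X\<close> by auto
  then have "card (A \<inter> X) < k"
    using psubset_card_mono[OF \<open>finite A\<close>] assms(7) by simp
  moreover have "card (X - A) = card X - card (A \<inter> X)"
    using card_Diff_subset_Int[of X A] assms(1) by (simp add: Int_commute)
  ultimately have "k \<le> card (X - A)" using assms(2) by simp
  then obtain B where B: "B \<subseteq> X - A" "card B = k"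
    using obtain_subset_with_card_n by metis
  then have "B \<in> F" using assms(5) unfolding ksubsets_def by auto
  then have "A \<inter> B \<noteq> {}" using assms(4,6) unfolding intersecting_def by blast
  then show False using B(1) by auto
qed

lemma mnk_intersecting_iff:
  assumes "0 < k" and "n = 2 * k - 1" and "n \<le> m"
  shows "mnk_intersecting m n k F \<longleftrightarrow> F = ksubsets {1..n} k"
proof
  assume F: "mnk_intersecting m n k F"
  have "F \<subseteq> ksubsets {1..n} k"
  proof
    fix A assume "A \<in> F"
    then have "card A = k"
      using F unfolding mnk_intersecting_def ksubsets_def by auto
    with \<open>A \<in> F\<close> have "A \<subseteq> {1..n}"
      using F assms(1,2) unfolding mnk_intersecting_def
      by (intro intersecting_superfamily_member_subset[of "{1..n}" k F]) auto
    with \<open>card A = k\<close> show "A \<in> ksubsets {1..n} k" unfolding ksubsets_def by simp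
  qed
  then show "F = ksubsets {1..n} k" using F unfolding mnk_intersecting_def by blast
next
  assume "F = ksubsets {1..n} k"
  moreover have "ksubsets {1..n} k \<subseteq> ksubsets {1..m} k"
    using assms(3) by (intro ksubsets_mono) auto
  moreover have "intersecting (ksubsets {1..n} k)"
    using assms(1,2) by (intro intersecting_ksubsets) auto
  ultimately show "mnk_intersecting m n k F" unfolding mnk_intersecting_def by simp
qed

lemma h_eq_choose:
  assumes "2 * k \<le> n + 1"
  shows "h m n k = n choose k"
proof -
  have "int (2 * k) - int n - 1 < 1" using assms by simp
  then show ?thesis unfolding h_def by simp
qed

theorem proposition6:
  fixes k m n :: nat
  assumes "0 < k" and "2 * k < m" and "n = 2 * k - 1"
  shows "alpha m n k = n choose k \<and> n choose k = h m n k \<and>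
         mnk_intersecting m n k (ksubsets {1..n} k) \<and>
         (\<forall>F. mnk_intersecting m n k F \<and> card F = alpha m n k \<longrightarrow> F = ksubsets {1..n} k)"
proof -
  have iff: "mnk_intersecting m n k F \<longleftrightarrow> F = ksubsets {1..n} k" for F
    using assms by (intro mnk_intersecting_iff) auto
  then have "{F. mnk_intersecting m n k F} = {ksubsets {1..n} k}" by blast
  then have "alpha m n k = n choose k"
    unfolding alpha_def using card_ksubsets[of "{1..n}" k] by simp
  moreover have "h m n k = n choose k" using assms by (intro h_eq_choose) simp
  ultimately show ?thesis using iff by simp
qed

end
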